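(* Let $t\in\mathbb{N}$ and let $C_1=C_1(t)$ be a constant with the property described in the context. Then there exists a constant $C_2=C_2(t)$ such that for all $\alpha_1,\ldots,\alpha_t\in\mathbb{T}$, all positive $\varepsilon\le 1/C_1(t)$, all positive $r\le 1$ and all positive integers $N$ and $U$, there is a nonempty finite set $S$ of integers satisfying (i) $U<\min S$; (ii) for all $j\le t$: $\sum_{n\in S}\|n\alpha_j\|^r\le C_2\,\dfrac{\varepsilon^r}{2^r-1}$; (iii) for all $\beta\in\mathbb{T}$: $\min\{1/6,\ \|\beta H_{N,\varepsilon}(\alpha_1,\ldots,\alpha_t)\|\}\le\|\beta S\|$.
   Context: $\mathbb{T}=\mathbb{R}/\mathbb{Z}$; $\|x\|$ is the distance from $x$ to the nearest integer. $H_{N,\varepsilon}(\alpha_1,\ldots,\alpha_t)=\{n\in\mathbb{N}, n\le N: \|n\alpha_1\|,\ldots,\|n\alpha_t\|\le\varepsilon\}$. For $\beta\in\mathbb{T}$ and a set $S$ of integers, $\|\beta S\|=\sup\{\|n\beta\|: n\in S\}$. The constant $C_1(t)$ (which exists by a result of Bir\'o and S\'os) has the property: for all $\alpha_1,\ldots,\alpha_t\in\mathbb{T}$, all positive $\varepsilon\le 1/C_1$ and all positive integers $N$ there exist $R\le C_1$, nonzero integers $n_1,\ldots,n_R$ and positive integers $K_1,\ldots,K_R$ such that (a) $\sum_{i=1}^R K_i\|n_i\alpha_j\|\le C_1\varepsilon$ for $1\le j\le t$; (b) $\sum_{i=1}^R K_i|n_i|\le C_1 N$; (c) $H_{N,\varepsilon}(\alpha_1,\ldots,\alpha_t)\subseteq\{\sum_{i=1}^R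 k_in_i: 1\le k_i\le K_i\}$. *)

theory Defs
  imports Complex_Main
begin

text \<open>Elements of the torus R/Z are represented by real representatives;
  all notions below depend only on the class modulo 1.\<close>

definition dnint :: "real \<Rightarrow> real" where
  "dnint x = \<bar>x - of_int (round x)\<bar>"

definition bohr_set :: "nat \<Rightarrow> real \<Rightarrow> nat \<Rightarrow> (nat \<Rightarrow> real) \<Rightarrow> int set" where
  "bohr_set N \<epsilon> t \<alpha> =
     {n. 1 \<le> n \<and> n \<le> int N \<and> (\<forall>j\<in>{1..t}. dnint (of_int n * \<alpha> j) \<le> \<epsilon>)}"

text \<open>||beta S|| = sup of ||n beta|| over n in S (convention: 0 for empty S).\<close>
definition set_norm :: "real \<Rightarrow> int set \<Rightarrow> real" where
  "set_norm \<beta> S = (if S = {} then 0 else Sup ((\<lambda>n. dnint (of_int n * \<beta>)) ` S))"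

definition biro_sos_const :: "nat \<Rightarrow> real \<Rightarrow> bool" where
  "biro_sos_const t C1 \<longleftrightarrow> C1 > 0 \<and>
     (\<forall>(\<alpha>::nat \<Rightarrow> real) (\<epsilon>::real) (N::nat). 0 < \<epsilon> \<and> \<epsilon> \<le> 1 / C1 \<and> 0 < N \<longrightarrow>
       (\<exists>(R::nat) (n::nat \<Rightarrow> int) (K::nat \<Rightarrow> int).
          real R \<le> C1 \<and>
          (\<forall>i\<in>{1..R}. n i \<noteq> 0 \<and> K i > 0) \<and>
          (\<forall>j\<in>{1..t}. (\<Sum>i=1..R. of_int (K i) * dnint (of_int (n i) * \<alpha> j)) \<le> C1 * \<epsilon>) \<and>
          (\<Sum>i=1..R. of_int (K i) * of_int \<bar>n i\<bar>) \<le> C1 * real N \<and>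
          bohr_set N \<epsilon> t \<alpha> \<subseteq>
            {(\<Sum>i=1..R. k i * n i) | k. \<forall>i\<in>{1..R}. 1 \<le> k i \<and> k i \<le> K i}))"

end

theory Submission
  imports Defs "HOL-Analysis.Kronecker_Approximation_Theorem"
begin

text \<open>
  Let n_i, K_i (i = 1..R) be the Biro-Sos data covering the Bohr set. Choose L_i with
  2RK_i \<le> 2^L_i \<le> 4RK_i, a base point X > U at which every ||X alpha_j|| is tiny (Dirichlet),
  and let S consist of X and the points X + 2^l |n_i| for l \<le> L_i.

  As r \<le> 1, u \<mapsto> u^r is subadditive, so each point of S contributes at most
  ||X alpha_j||^r + (2^l ||n_i alpha_j||)^r; the geometric sum over l is at most its last term
  divided by 2^r - 1, and 2^L_i ||n_i alpha_j|| \<le> 4R K_i ||n_i alpha_j|| \<le> 4 C1^2 eps.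

  Conversely, if delta = ||beta S|| < 1/6 then ||2^l n_i beta|| \<le> 2 delta < 1/3 for all l \<le> L_i.
  Below 1/3 doubling on the circle doubles the norm, so ||n_i beta|| \<le> 2 delta / 2^L_i \<le>
  delta / (R K_i), and every element sum k_i n_i (k_i \<le> K_i) of the Bohr set has
  ||beta sum k_i n_i|| \<le> delta.
\<close>

lemma dnint_nonneg: "0 \<le> dnint x"
  by (simp add: dnint_def)

lemma dnint_le_half: "dnint x \<le> 1/2"
  unfolding dnint_def using of_int_round_abs_le[of x] by linarith

lemma dnint_le_dist_int: "dnint x \<le> \<bar>x - of_int m\<bar>"
  unfolding dnint_def by (rule round_diff_minimal)

lemma dnint_eq_dist_int:
  assumes "\<bar>x - of_int m\<bar> \<le> 1/2"
  shows "dnint x = \<bar>x - of_int m\<bar>"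
proof (cases "m = round x")
  case False
  then have "1 \<le> \<bar>m - round x\<bar>"
    by linarith
  then have "(1::real) \<le> \<bar>of_int m - of_int (round x)\<bar>"
    by (metis of_int_1_le_iff of_int_abs of_int_diff)
  then have "\<bar>x - of_int m\<bar> \<le> dnint x"
    unfolding dnint_def using assms by linarith
  then show ?thesis
    using dnint_le_dist_int[of x m] by linarith
qed (simp add: dnint_def)

lemma dnint_add_of_int: "dnint (x + of_int m) = dnint x"
  using dnint_eq_dist_int[of "x + of_int m" "round x + m"] of_int_round_abs_le[of x]
  by (simp add: dnint_def abs_minus_commute)

lemma dnint_uminus: "dnint (- x) = dnint x"
  using dnint_le_dist_int[of "- x" "- round x"] dnint_le_dist_int[of x "- round (- x)"]
  by (simp add: dnint_def)

lemma dnint_add_le: "dnint (x + y) \<le> dnint x + dnint y"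
proof -
  have "dnint (x + y) \<le> \<bar>x + y - of_int (round x + round y)\<bar>"
    by (rule dnint_le_dist_int)
  also have "\<dots> \<le> dnint x + dnint y"
    unfolding dnint_def by simp
  finally show ?thesis .
qed

lemma dnint_diff_le: "dnint (x - y) \<le> dnint x + dnint y"
  using dnint_add_le[of x "- y"] by (simp add: dnint_uminus)

lemma dnint_sum_le: "dnint (\<Sum>i\<in>A. f i) \<le> (\<Sum>i\<in>A. dnint (f i))"
proof (induction A rule: infinite_finite_induct)
  case (insert a A)
  then show ?case
    using dnint_add_le[of "f a" "sum f A"] by simp
qed (simp_all add: dnint_def)

lemma dnint_of_int_mult_le: "dnint (of_int k * x) \<le> \<bar>of_int k\<bar> * dnint x"
proof -
  have "dnint (of_int k * x) \<le> \<bar>of_int k * x - of_int (k * round x)\<bar>"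
    by (rule dnint_le_dist_int)
  also have "\<dots> = \<bar>of_int k\<bar> * dnint x"
    unfolding dnint_def by (simp add: abs_mult[symmetric] algebra_simps)
  finally show ?thesis .
qed

lemma dnint_abs_of_int_mult: "dnint (of_int \<bar>n\<bar> * x) = dnint (of_int n * x)"
  by (cases "n \<ge> 0") (simp_all add: dnint_uminus[of "of_int n * x", symmetric])

lemma dnint_eq_min_abs:
  assumes "\<bar>x\<bar> \<le> 1"
  shows "dnint x = min \<bar>x\<bar> (1 - \<bar>x\<bar>)"
proof -
  consider "\<bar>x\<bar> \<le> 1/2" | "x > 1/2" | "x < - 1/2"
    by linarith
  then show ?thesis
  proof cases
    case 1
    then show ?thesis using dnint_eq_dist_int[of x 0] by simp
  next
    case 2
    then show ?thesis using dnint_eq_dist_int[of x 1] assms by simp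
  next
    case 3
    then show ?thesis using dnint_eq_dist_int[of x "-1"] assms by simp
  qed
qed

lemma dnint_double: "dnint (2 * x) = min (2 * dnint x) (1 - 2 * dnint x)"
proof -
  define e where "e = x - of_int (round x)"
  have e: "\<bar>e\<bar> = dnint x" "\<bar>e\<bar> \<le> 1/2"
    using of_int_round_abs_le[of x] by (simp_all add: e_def dnint_def abs_minus_commute)
  have "dnint (2 * x) = dnint (2 * e + of_int (2 * round x))"
    by (simp add: e_def algebra_simps)
  also have "\<dots> = min \<bar>2 * e\<bar> (1 - \<bar>2 * e\<bar>)"
    unfolding dnint_add_of_int using e(2) by (intro dnint_eq_min_abs) simp
  finally show ?thesis
    using e(1) by simp
qed

lemma dnint_le_halving:
  assumes "\<And>l. l \<le> L \<Longrightarrow> dnint (2^l * x) \<le> d" "d < 1/3"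
  shows "dnint x \<le> d / 2^L"
  using assms(1)
proof (induction L arbitrary: x)
  case (Suc L)
  have "dnint (2 * x) \<le> d / 2^L"
  proof (rule Suc.IH)
    show "dnint (2^l * (2 * x)) \<le> d" if "l \<le> L" for l
      using Suc.prems[of "Suc l"] that by (simp add: mult_ac)
  qed
  moreover have "dnint x \<le> d" "dnint (2 * x) \<le> d"
    using Suc.prems[of 0] Suc.prems[of 1] by simp_all
  then have "dnint (2 * x) = 2 * dnint x"
    using dnint_double[of x] assms(2) by linarith
  ultimately show ?case
    by simp
qed simp

lemma powr_add_le_add_powr:
  fixes x y r :: real
  assumes "0 \<le> x" "0 \<le> y" "0 < r" "r \<le> 1"
  shows "(x + y) powr r \<le> x powr r + y powr r"
proof (cases "x + y = 0")
  case False
  define s where "s = x + y"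
  have s: "0 < s"
    using False assms by (simp add: s_def)
  have le_powr: "u \<le> u powr r" if "0 \<le> u" "u \<le> 1" for u
    using powr_mono'[of r 1 u] that assms by (cases "u = 0") auto
  have "x / s \<le> (x / s) powr r" "y / s \<le> (y / s) powr r"
    using assms s by (auto simp: s_def intro!: le_powr)
  moreover have "x / s + y / s = 1"
    using s by (simp add: s_def add_divide_distrib[symmetric])
  ultimately have "1 \<le> (x / s) powr r + (y / s) powr r"
    by linarith
  also have "\<dots> = (x powr r + y powr r) / s powr r"
    using assms s by (simp add: powr_divide add_divide_distrib)
  finally show ?thesis
    using s by (simp add: s_def le_divide_eq)
qed (use assms in simp)

lemma powr_le_one_add: "0 \<le> (x::real) \<Longrightarrow> 0 < r \<Longrightarrow> r \<le> 1 \<Longrightarrow> x powr r \<le> 1 + x"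
  by (cases "x \<le> 1") (use powr_le1[of r x] powr_mono[of r 1 x] in auto)

lemma sum_powr_doubling_le:
  fixes a r :: real
  assumes "0 \<le> a" "0 < r"
  shows "(\<Sum>l\<le>L. (2^l * a) powr r) \<le> (2^Suc L * a) powr r / (2 powr r - 1)"
proof -
  have q: "1 < 2 powr r"
    using assms by simp
  have "(\<Sum>l\<le>L. (2^l * a) powr r) = a powr r * (\<Sum>l<Suc L. (2 powr r)^l)"
    using assms
    by (simp add: powr_mult sum_distrib_left lessThan_Suc_atMost powr_realpow[symmetric]
        powr_powr mult.commute flip: powr_power)
  also have "(\<Sum>l<Suc L. (2 powr r)^l) = ((2 powr r)^Suc L - 1) / (2 powr r - 1)"
    using q by (subst sum_gp_strict) (auto simp: field_simps)
  also have "\<dots> \<le> (2 powr r)^Suc L / (2 powr r - 1)"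
    using q by (simp add: divide_right_mono)
  also have "(2 powr r)^n = (2^n) powr r" for n
    by (simp add: powr_powr mult.commute flip: powr_realpow)
  finally show ?thesis
    using assms by (simp add: powr_mult mult_ac mult_right_mono)
qed

lemma set_norm_upper: "s \<in> S \<Longrightarrow> dnint (of_int s * \<beta>) \<le> set_norm \<beta> S"
  unfolding set_norm_def
  by (auto intro!: cSup_upper bdd_aboveI[of _ "1/2"] simp: dnint_le_half[simplified])

lemma set_norm_le:
  assumes "0 \<le> \<delta>" "\<And>s. s \<in> S \<Longrightarrow> dnint (of_int s * \<beta>) \<le> \<delta>"
  shows "set_norm \<beta> S \<le> \<delta>"
  using assms unfolding set_norm_def by (auto intro!: cSup_least)

lemma exists_power_of_two_between:
  fixes m :: int
  assumes "1 \<le> m"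
  shows "\<exists>L. m \<le> 2^L \<and> 2^L \<le> 2 * m"
proof -
  have "1 \<le> nat m"
    using assms by simp
  then obtain e where "2^e \<le> nat m" "nat m < 2^(e+1)"
    using ex_power_ivl1[of 2] by blast
  then have "2^e \<le> m" "m < 2^(e+1)"
    using assms by (simp_all add: le_nat_iff nat_less_iff)
  then show ?thesis
    by (intro exI[of _ "e+1"]) simp
qed

lemma exists_int_gt_dnint_mult_le:
  fixes \<alpha> :: "nat \<Rightarrow> real" and U :: int
  assumes "0 < \<eta>"
  shows "\<exists>X. U < X \<and> (\<forall>j\<le>t. dnint (of_int X * \<alpha> j) \<le> \<eta>)"
proof -
  define m where "m = \<bar>U\<bar> + 1"
  obtain M :: nat where M: "of_int m / \<eta> < M"
    using reals_Archimedean2 by blast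
  moreover have "0 < of_int m / \<eta>"
    using assms by (simp add: m_def)
  ultimately have "0 < M"
    by simp
  then obtain q p where q: "0 < q" and qp: "\<And>j. j < Suc t \<Longrightarrow> \<bar>of_int q * \<alpha> j - of_int (p j)\<bar> < 1/M"
    by (rule Dirichlet_approx_simult[where \<theta>=\<alpha> and n="Suc t"]) blast
  have "dnint (of_int (m * q) * \<alpha> j) \<le> \<eta>" if "j \<le> t" for j
  proof -
    have "dnint (of_int (m * q) * \<alpha> j) \<le> of_int m * dnint (of_int q * \<alpha> j)"
      using dnint_of_int_mult_le[of m "of_int q * \<alpha> j"] by (simp add: m_def mult.assoc)
    also have "\<dots> \<le> of_int m * (1 / M)"
      using dnint_le_dist_int[of "of_int q * \<alpha> j" "p j"] qp[of j] that
      by (intro mult_left_mono) (auto simp: m_def)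
    also have "\<dots> \<le> \<eta>"
      using M assms \<open>0 < M\<close> by (simp add: field_simps)
    finally show ?thesis .
  qed
  moreover have "m \<le> m * q"
    using q mult_left_mono[of 1 q m] by (simp add: m_def)
  then have "U < m * q"
    unfolding m_def by linarith
  ultimately show ?thesis
    by blast
qed

definition doubling_set :: "int \<Rightarrow> (nat \<Rightarrow> int) \<Rightarrow> nat \<Rightarrow> (nat \<Rightarrow> nat) \<Rightarrow> int set" where
  "doubling_set X n R L = insert X ((\<lambda>(i, l). X + 2^l * \<bar>n i\<bar>) ` (SIGMA i:{1..R}. {..L i}))"

lemma finite_doubling_set: "finite (doubling_set X n R L)"
  by (simp add: doubling_set_def)

lemma base_mem_doubling_set: "X \<in> doubling_set X n R L"
  by (simp add: doubling_set_def)

lemma Min_doubling_set: "Min (doubling_set X n R L) = X"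
  unfolding doubling_set_def by (rule Min_eqI) auto

lemma set_norm_doubling_set_nonneg: "0 \<le> set_norm \<beta> (doubling_set X n R L)"
  using set_norm_upper[OF base_mem_doubling_set] dnint_nonneg order_trans by blast

lemma sum_dnint_powr_doubling_set_le:
  assumes "0 < r" "r \<le> 1" "dnint (of_int X * \<theta>) \<le> \<eta>"
  shows "(\<Sum>s\<in>doubling_set X n R L. dnint (of_int s * \<theta>) powr r)
           \<le> (1 + real (\<Sum>i=1..R. Suc (L i))) * \<eta> powr r
              + (\<Sum>i=1..R. (2^Suc (L i) * dnint (of_int (n i) * \<theta>)) powr r) / (2 powr r - 1)"
proof -
  define f where "f s = dnint (of_int s * \<theta>) powr r" for s
  define g :: "nat \<times> nat \<Rightarrow> int" where "g = (\<lambda>(i, l). X + 2^l * \<bar>n i\<bar>)"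
  define a where "a i = dnint (of_int (n i) * \<theta>)" for i
  define I where "I = (SIGMA i:{1..R}. {..L i})"
  have "0 \<le> \<eta>"
    using assms(3) dnint_nonneg order.trans by blast
  have fX: "f X \<le> \<eta> powr r"
    unfolding f_def using assms by (intro powr_mono2) (auto simp: dnint_nonneg)
  have fg: "f (g (i, l)) \<le> \<eta> powr r + (2^l * a i) powr r" for i l
  proof -
    have "dnint (of_int (g (i, l)) * \<theta>)
          = dnint (of_int X * \<theta> + of_int (2^l) * (of_int \<bar>n i\<bar> * \<theta>))"
      by (simp add: g_def algebra_simps)
    also have "\<dots> \<le> dnint (of_int X * \<theta>) + dnint (of_int (2^l) * (of_int \<bar>n i\<bar> * \<theta>))"
      by (rule dnint_add_le)
    also have "\<dots> \<le> \<eta> + 2^l * a i"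
      using assms(3) dnint_of_int_mult_le[of "2^l" "of_int \<bar>n i\<bar> * \<theta>"]
      unfolding dnint_abs_of_int_mult a_def by (intro add_mono) simp_all
    finally have "f (g (i, l)) \<le> (\<eta> + 2^l * a i) powr r"
      unfolding f_def using assms by (intro powr_mono2) (auto simp: dnint_nonneg)
    also have "\<dots> \<le> \<eta> powr r + (2^l * a i) powr r"
      using assms \<open>0 \<le> \<eta>\<close> by (intro powr_add_le_add_powr) (auto simp: a_def dnint_nonneg)
    finally show ?thesis .
  qed
  have "(\<Sum>s\<in>doubling_set X n R L. f s) \<le> f X + (\<Sum>s\<in>g ` I. f s)"
    unfolding doubling_set_def g_def I_def by (simp add: sum.insert_if f_def)
  also have "(\<Sum>s\<in>g ` I. f s) \<le> (\<Sum>p\<in>I. f (g p))"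
    using sum_image_le[of I f g] by (simp add: I_def f_def o_def)
  also have "\<dots> \<le> (\<Sum>(i, l)\<in>I. \<eta> powr r + (2^l * a i) powr r)"
    by (intro sum_mono) (auto simp: fg)
  also have "\<dots> = card I * \<eta> powr r + (\<Sum>(i, l)\<in>I. (2^l * a i) powr r)"
    by (simp add: sum.distrib split_def)
  also have "(\<Sum>(i, l)\<in>I. (2^l * a i) powr r) = (\<Sum>i=1..R. \<Sum>l\<le>L i. (2^l * a i) powr r)"
    unfolding I_def by (rule sum.Sigma[symmetric]) auto
  also have "(\<Sum>i=1..R. \<Sum>l\<le>L i. (2^l * a i) powr r)
             \<le> (\<Sum>i=1..R. (2^Suc (L i) * a i) powr r / (2 powr r - 1))"
    using assms by (intro sum_mono sum_powr_doubling_le) (auto simp: a_def dnint_nonneg)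
  finally show ?thesis
    using fX by (simp add: I_def card_SigmaI f_def a_def sum_divide_distrib algebra_simps)
qed

lemma dnint_doubling_set_le:
  assumes "set_norm \<beta> (doubling_set X n R L) < 1/6" "i \<in> {1..R}"
  shows "dnint (of_int (n i) * \<beta>) \<le> 2 * set_norm \<beta> (doubling_set X n R L) / 2^L i"
proof -
  define \<delta> where "\<delta> = set_norm \<beta> (doubling_set X n R L)"
  have "dnint (2^l * (of_int \<bar>n i\<bar> * \<beta>)) \<le> 2 * \<delta>" if "l \<le> L i" for l
  proof -
    have "X + 2^l * \<bar>n i\<bar> \<in> doubling_set X n R L"
      using assms(2) that unfolding doubling_set_def by force
    have "dnint (2^l * (of_int \<bar>n i\<bar> * \<beta>))
          = dnint (of_int (X + 2^l * \<bar>n i\<bar>) * \<beta> - of_int X * \<beta>)"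
      by (simp add: algebra_simps)
    also have "\<dots> \<le> dnint (of_int (X + 2^l * \<bar>n i\<bar>) * \<beta>) + dnint (of_int X * \<beta>)"
      by (rule dnint_diff_le)
    also have "\<dots> \<le> 2 * \<delta>"
      using set_norm_upper[of _ _ \<beta>, OF \<open>X + 2^l * \<bar>n i\<bar> \<in> doubling_set X n R L\<close>]
        set_norm_upper[of X "doubling_set X n R L" \<beta>, OF base_mem_doubling_set]
      unfolding \<delta>_def by linarith
    finally show ?thesis .
  qed
  then have "dnint (of_int \<bar>n i\<bar> * \<beta>) \<le> 2 * \<delta> / 2^L i"
    using assms(1) by (intro dnint_le_halving) (auto simp: \<delta>_def)
  then show ?thesis
    by (simp only: dnint_abs_of_int_mult \<delta>_def)
qed

lemma set_norm_le_set_norm_doubling_set: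
  assumes H: "H \<subseteq> {(\<Sum>i=1..R. k i * n i) | k. \<forall>i\<in>{1..R}. 1 \<le> k i \<and> k i \<le> K i}"
    and L: "\<forall>i\<in>{1..R}. 2 * int R * K i \<le> 2^L i"
    and small: "set_norm \<beta> (doubling_set X n R L) < 1/6"
  shows "set_norm \<beta> H \<le> set_norm \<beta> (doubling_set X n R L)"
proof (rule set_norm_le)
  define \<delta> where "\<delta> = set_norm \<beta> (doubling_set X n R L)"
  have "0 \<le> \<delta>"
    unfolding \<delta>_def by (rule set_norm_doubling_set_nonneg)
  then show "0 \<le> \<delta>" .
  fix h assume "h \<in> H"
  then obtain k where h: "h = (\<Sum>i=1..R. k i * n i)" and k: "\<forall>i\<in>{1..R}. 1 \<le> k i \<and> k i \<le> K i"
    using H by blast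
  have "dnint (of_int h * \<beta>) \<le> (\<Sum>i=1..R. dnint (of_int (k i) * (of_int (n i) * \<beta>)))"
    using dnint_sum_le[of "\<lambda>i. of_int (k i) * (of_int (n i) * \<beta>)" "{1..R}"]
    by (simp add: h sum_distrib_right mult.assoc)
  also have "\<dots> \<le> (\<Sum>i=1..R. \<delta> / R)"
  proof (rule sum_mono)
    fix i assume i: "i \<in> {1..R}"
    have "2 * int R * k i \<le> 2 * int R * K i"
      using k i by (intro mult_left_mono) simp_all
    moreover have "2 * int R * K i \<le> 2^L i"
      using L i by blast
    ultimately have "2 * int R * k i \<le> 2^L i"
      by linarith
    then have "real_of_int (2 * int R * k i) \<le> of_int (2^L i)"
      by (simp only: of_int_le_iff)
    then have kL: "2 * real R * of_int (k i) \<le> 2^L i"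
      by simp
    have "1 \<le> k i"
      using k i by blast
    then have "dnint (of_int (k i) * (of_int (n i) * \<beta>)) \<le> of_int (k i) * dnint (of_int (n i) * \<beta>)"
      using dnint_of_int_mult_le[of "k i" "of_int (n i) * \<beta>"] by simp
    also have "\<dots> \<le> of_int (k i) * (2 * \<delta> / 2^L i)"
      using dnint_doubling_set_le[OF small i] \<open>1 \<le> k i\<close>
      by (intro mult_left_mono) (simp_all add: \<delta>_def)
    also have "\<dots> = 2 * real R * of_int (k i) * \<delta> / (2^L i * R)"
      using i by (simp add: field_simps)
    also have "\<dots> \<le> 2^L i * \<delta> / (2^L i * R)"
      using kL \<open>0 \<le> \<delta>\<close> by (intro divide_right_mono mult_right_mono) simp_all
    also have "\<dots> = \<delta> / R"
      by simp
    finally show "dnint (of_int (k i) * (of_int (n i) * \<beta>)) \<le> \<delta> / R" .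
  qed
  also have "\<dots> \<le> \<delta>"
    using \<open>0 \<le> \<delta>\<close> by (cases "R = 0") auto
  finally show "dnint (of_int h * \<beta>) \<le> \<delta>" .
qed

lemma sum_powr_doubled_le:
  assumes L: "\<forall>i\<in>{1..R}. 0 < K i \<and> 2^L i \<le> 4 * int R * K i"
    and a: "\<forall>i\<in>{1..R}. 0 \<le> a i"
    and Ka: "(\<Sum>i=1..R. of_int (K i) * a i) \<le> C * \<epsilon>"
    and R: "real R \<le> C"
    and "0 \<le> \<epsilon>" "0 < r" "r \<le> 1"
  shows "(\<Sum>i=1..R. (2^Suc (L i) * a i) powr r) \<le> C * (1 + 8 * C^2) * \<epsilon> powr r"
proof -
  have "0 \<le> C"
    using R of_nat_0_le_iff[of R] by linarith
  have summand: "(2^Suc (L i) * a i) powr r \<le> (1 + 8 * C^2) * \<epsilon> powr r" if i: "i \<in> {1..R}" for i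
  proof -
    have K0: "0 < K i" and a0: "0 \<le> a i"
      using L a i by simp_all
    have "of_int (K i) * a i \<le> (\<Sum>i=1..R. of_int (K i) * a i)"
      using L a i by (intro member_le_sum) (auto simp: less_imp_le)
    then have Ka_i: "of_int (K i) * a i \<le> C * \<epsilon>"
      using Ka by linarith
    have "real_of_int (2^L i) \<le> of_int (4 * int R * K i)"
      using L i by (simp only: of_int_le_iff)
    then have "2^L i * a i \<le> 4 * real R * of_int (K i) * a i"
      using a i by (intro mult_right_mono) simp_all
    then have "2^Suc (L i) * a i \<le> 8 * real R * (of_int (K i) * a i)"
      by (simp add: algebra_simps)
    also have "\<dots> \<le> 8 * C * (C * \<epsilon>)"
      by (rule mult_mono) (use R Ka_i \<open>0 \<le> C\<close> K0 a0 in simp_all)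
    finally have "(2^Suc (L i) * a i) powr r \<le> (8 * C^2 * \<epsilon>) powr r"
      using a i assms by (intro powr_mono2) (auto simp: power2_eq_square mult_ac)
    also have "\<dots> = (8 * C^2) powr r * \<epsilon> powr r"
      using \<open>0 \<le> \<epsilon>\<close> by (simp add: powr_mult)
    also have "\<dots> \<le> (1 + 8 * C^2) * \<epsilon> powr r"
      using assms by (intro mult_right_mono powr_le_one_add) auto
    finally show ?thesis .
  qed
  have "(\<Sum>i=1..R. (2^Suc (L i) * a i) powr r) \<le> (\<Sum>i=1..R. (1 + 8 * C^2) * \<epsilon> powr r)"
    by (intro sum_mono summand)
  also have "\<dots> = real R * ((1 + 8 * C^2) * \<epsilon> powr r)"
    by simp
  also have "\<dots> \<le> C * (1 + 8 * C^2) * \<epsilon> powr r"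
    using R by (simp add: mult_right_mono mult.assoc)
  finally show ?thesis .
qed

lemma exists_sparse_set_for_cover:
  fixes U :: int and \<alpha> :: "nat \<Rightarrow> real"
  assumes R: "real R \<le> C1"
    and K: "\<forall>i\<in>{1..R}. 0 < K i"
    and small_sum: "\<forall>j\<in>{1..t}. (\<Sum>i=1..R. of_int (K i) * dnint (of_int (n i) * \<alpha> j)) \<le> C1 * \<epsilon>"
    and H: "H \<subseteq> {(\<Sum>i=1..R. k i * n i) | k. \<forall>i\<in>{1..R}. 1 \<le> k i \<and> k i \<le> K i}"
    and "0 < \<epsilon>" "0 < r" "r \<le> 1"
  shows "\<exists>S. finite S \<and> S \<noteq> {} \<and> U < Min S \<and>
           (\<forall>j\<in>{1..t}. (\<Sum>s\<in>S. dnint (of_int s * \<alpha> j) powr r)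
                          \<le> (1 + C1 * (1 + 8 * C1^2)) * (\<epsilon> powr r / (2 powr r - 1))) \<and>
           (\<forall>\<beta>. min (1/6) (set_norm \<beta> H) \<le> set_norm \<beta> S)"
proof -
  have "\<exists>L. 2 * int R * K i \<le> 2^L \<and> 2^L \<le> 4 * int R * K i" if i: "i \<in> {1..R}" for i
  proof -
    have "1 \<le> int R" "1 \<le> K i"
      using bspec[OF K i] i by auto
    then have "1 \<le> int R * K i"
      using mult_mono[of 1 "int R" 1 "K i"] by simp
    then show ?thesis
      using exists_power_of_two_between[of "2 * int R * K i"] by (simp add: mult.assoc)
  qed
  then obtain L where L: "\<forall>i\<in>{1..R}. 2 * int R * K i \<le> 2^L i \<and> 2^L i \<le> 4 * int R * K i"
    by metis
  define c where "c = 1 + real (\<Sum>i=1..R. Suc (L i))"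
  define \<eta> where "\<eta> = (\<epsilon> powr r / c) powr (1 / r)"
  have "0 < c"
    unfolding c_def by linarith
  then have "0 < \<eta>"
    using \<open>0 < \<epsilon>\<close> unfolding \<eta>_def by simp
  have c_\<eta>: "c * \<eta> powr r = \<epsilon> powr r"
    unfolding \<eta>_def using \<open>0 < r\<close> \<open>0 < c\<close> \<open>0 < \<epsilon>\<close> by (simp add: powr_powr)
  obtain X where "U < X" and X: "\<forall>j\<le>t. dnint (of_int X * \<alpha> j) \<le> \<eta>"
    using exists_int_gt_dnint_mult_le[OF \<open>0 < \<eta>\<close>] by blast
  define S where "S = doubling_set X n R L"
  define q where "q = 2 powr r - 1"
  have "0 < q"
    unfolding q_def using \<open>0 < r\<close> by simp
  have "q \<le> 1"
    unfolding q_def using powr_mono[of r 1 2] \<open>r \<le> 1\<close> by simp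
  have "(\<Sum>s\<in>S. dnint (of_int s * \<alpha> j) powr r) \<le> (1 + C1 * (1 + 8 * C1^2)) * (\<epsilon> powr r / q)"
    if j: "j \<in> {1..t}" for j
  proof -
    have Xj: "dnint (of_int X * \<alpha> j) \<le> \<eta>"
      using X j by simp
    have doubled: "(\<Sum>i=1..R. (2^Suc (L i) * dnint (of_int (n i) * \<alpha> j)) powr r)
                   \<le> C1 * (1 + 8 * C1^2) * \<epsilon> powr r"
      by (rule sum_powr_doubled_le) (use L K small_sum j R assms in \<open>auto simp: dnint_nonneg\<close>)
    have "\<epsilon> powr r \<le> \<epsilon> powr r / q"
      using mult_left_le[of q "\<epsilon> powr r"] \<open>0 < q\<close> \<open>q \<le> 1\<close> by (simp add: le_divide_eq)
    have "(\<Sum>s\<in>S. dnint (of_int s * \<alpha> j) powr r)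
          \<le> c * \<eta> powr r + (\<Sum>i=1..R. (2^Suc (L i) * dnint (of_int (n i) * \<alpha> j)) powr r) / q"
      unfolding S_def q_def c_def by (rule sum_dnint_powr_doubling_set_le[OF \<open>0 < r\<close> \<open>r \<le> 1\<close> Xj])
    also have "\<dots> \<le> \<epsilon> powr r / q + C1 * (1 + 8 * C1^2) * \<epsilon> powr r / q"
      unfolding c_\<eta> using doubled \<open>0 < q\<close> \<open>\<epsilon> powr r \<le> \<epsilon> powr r / q\<close>
      by (intro add_mono divide_right_mono) simp_all
    also have "\<dots> = (1 + C1 * (1 + 8 * C1^2)) * (\<epsilon> powr r / q)"
      by (simp add: distrib_right add_divide_distrib)
    finally show ?thesis .
  qed
  moreover have "min (1/6) (set_norm \<beta> H) \<le> set_norm \<beta> S" for \<beta>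
  proof (cases "set_norm \<beta> S < 1/6")
    case True
    have "\<forall>i\<in>{1..R}. 2 * int R * K i \<le> 2^L i"
      using L by blast
    then have "set_norm \<beta> H \<le> set_norm \<beta> S"
      using set_norm_le_set_norm_doubling_set[OF H] True unfolding S_def by blast
    then show ?thesis
      by simp
  qed simp
  moreover have "finite S" "S \<noteq> {}" "Min S = X"
    using base_mem_doubling_set[of X n R L] by (auto simp: S_def finite_doubling_set Min_doubling_set)
  ultimately show ?thesis
    using \<open>U < X\<close> unfolding q_def by auto
qed

theorem lemma7:
  fixes t :: nat and C1 :: real
  assumes "biro_sos_const t C1"
  shows "\<exists>C2::real. \<forall>(\<alpha>::nat \<Rightarrow> real) (\<epsilon>::real) (r::real) (N::nat) (U::nat).
           0 < \<epsilon> \<and> \<epsilon> \<le> 1 / C1 \<and> 0 < r \<and> r \<le> 1 \<and> 0 < N \<and> 0 < U \<longrightarrow>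
           (\<exists>S::int set. finite S \<and> S \<noteq> {} \<and>
              int U < Min S \<and>
              (\<forall>j\<in>{1..t}. (\<Sum>n\<in>S. dnint (of_int n * \<alpha> j) powr r)
                              \<le> C2 * (\<epsilon> powr r / (2 powr r - 1))) \<and>
              (\<forall>\<beta>::real. min (1/6) (set_norm \<beta> (bohr_set N \<epsilon> t \<alpha>)) \<le> set_norm \<beta> S))"
  apply (rule exI[of _ "1 + C1 * (1 + 8 * C1^2)"], intro allI impI)
  subgoal premises params for \<alpha> \<epsilon> r N U
  proof -
    obtain R n K where "real R \<le> C1" "\<forall>i\<in>{1..R}. 0 < K i"
      "\<forall>j\<in>{1..t}. (\<Sum>i=1..R. of_int (K i) * dnint (of_int (n i) * \<alpha> j)) \<le> C1 * \<epsilon>"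
      "bohr_set N \<epsilon> t \<alpha> \<subseteq> {(\<Sum>i=1..R. k i * n i) | k. \<forall>i\<in>{1..R}. 1 \<le> k i \<and> k i \<le> K i}"
      using assms[unfolded biro_sos_const_def, THEN conjunct2, rule_format, of \<epsilon> N \<alpha>] params
      by blast
    then show ?thesis
      using params by (intro exists_sparse_set_for_cover) auto
  qed
  done

end
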